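(* Let $\alpha\ge0$ and let $X$ be a homogeneous Poisson point process in $\mathbb R^d$ of intensity $1$ with distribution $\mathbb P$. For $\varphi\in\mathbf N_o$ let $$\xi_{\rm RN}(\varphi)=\frac12\sum_{x\in\varphi:\ \varphi\cap B_{|x|}(o)\cap B_{|x|}(x)=\emptyset}|x|^\alpha.$$ Then $\xi_{\rm RN}$ is weakly decreasing, i.e., there exists $k\ge1$ such that $$\mathbb P\big(\#\{y\in X:\ \xi_{\rm RN}(X\cup\{o\}-y)>\xi_{\rm RN}(X-y)\}\le k\big)=1.$$
   Context: $\mathbf N_o$ denotes the locally finite point configurations in $\mathbb R^d$ containing the origin $o$; $B_r(z)$ is the open Euclidean ball of radius $r$ around $z$; $\varphi-y$ denotes the configuration shifted by $-y$. $\xi_{\rm RN}$ is the score function of the sum of $\alpha$-power-weighted edge lengths at the origin in the relative neighborhood graph. *)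

theory Defs
  imports "HOL-Probability.Probability"
begin

definition locally_finite_cfg :: "'a::euclidean_space set \<Rightarrow> bool" where
  "locally_finite_cfg \<phi> \<longleftrightarrow> (\<forall>K. bounded K \<longrightarrow> finite (\<phi> \<inter> K))"

definition shift_cfg :: "'a::euclidean_space set \<Rightarrow> 'a \<Rightarrow> 'a set" where
  "shift_cfg \<phi> y = (\<lambda>x. x - y) ` \<phi>"

definition xi_RN :: "real \<Rightarrow> 'a::euclidean_space set \<Rightarrow> ennreal" where
  "xi_RN \<alpha> \<phi> = ennreal (1/2) *
     (\<integral>\<^sup>+ x. ennreal (norm x powr \<alpha>)
        \<partial>count_space {x \<in> \<phi>. \<phi> \<inter> ball 0 (norm x) \<inter> ball x (norm x) = {}})"

definition poisson_pp :: "'w measure \<Rightarrow> ('w \<Rightarrow> 'a::euclidean_space set) \<Rightarrow> bool" where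
  "poisson_pp M X \<longleftrightarrow>
     prob_space M \<and>
     (\<forall>\<omega>\<in>space M. locally_finite_cfg (X \<omega>)) \<and>
     (\<forall>B. B \<in> sets lborel \<and> bounded B \<longrightarrow>
        (\<lambda>\<omega>. card (X \<omega> \<inter> B)) \<in> measurable M (count_space UNIV) \<and>
        (\<forall>n::nat. measure M {\<omega>\<in>space M. card (X \<omega> \<inter> B) = n}
                   = exp (- measure lborel B) * measure lborel B ^ n / fact n)) \<and>
     (\<forall>(I::nat set) B. finite I \<and> (\<forall>i\<in>I. B i \<in> sets lborel \<and> bounded (B i)) \<and>
        disjoint_family_on B I \<longrightarrow>
        prob_space.indep_vars M (\<lambda>_. count_space UNIV) (\<lambda>i \<omega>. card (X \<omega> \<inter> B i)) I)"

end

theory Submission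
  imports Defs
begin

(* If inserting o raises the score at y, then in the relative neighbourhood graph of (X u {o}) - y
   the new point o - y is a neighbour of the origin: inserting a point that is not itself a
   neighbour can only remove neighbours. Translating back, the lune B_|y|(o) n B_|y|(y) contains no
   point of X, i.e. y is a neighbour of o in X u {o}. If the points of X have pairwise distinct
   norms, two such neighbours x, y with |x| < |y| satisfy |x - y| >= |y|, so they subtend an angle
   of at least pi/3 at o; their directions are 1-separated points of the unit sphere, and a grid
   of mesh 1/d shows that there are at most (2d+1)^d of them. Distinct norms hold almost surely:
   two points of equal norm below R lie in one of n concentric shells of volume O(1/n), and a
   Poisson process puts two points into a set of volume v with probability at most v^2, so a tie
   has probability O(1/n) for every n. *)

definition lune :: "'a::euclidean_space \<Rightarrow> 'a set" where
  "lune x = ball 0 (norm x) \<inter> ball x (norm x)"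

definition rng_neighbours :: "'a::euclidean_space set \<Rightarrow> 'a set" where
  "rng_neighbours \<phi> = {x \<in> \<phi>. \<phi> \<inter> lune x = {}}"

lemma xi_RN_eq_rng_neighbours:
  "xi_RN \<alpha> \<phi> = ennreal (1/2) * (\<integral>\<^sup>+ x. ennreal (norm x powr \<alpha>) \<partial>count_space (rng_neighbours \<phi>))"
  by (simp add: xi_RN_def rng_neighbours_def lune_def Int_assoc)

lemma xi_RN_mono_rng_neighbours:
  assumes "rng_neighbours \<phi> \<subseteq> rng_neighbours \<psi>"
  shows "xi_RN \<alpha> \<phi> \<le> xi_RN \<alpha> \<psi>"
proof -
  have "(\<integral>\<^sup>+ x. ennreal (norm x powr \<alpha>) \<partial>count_space (rng_neighbours \<phi>))
      \<le> (\<integral>\<^sup>+ x. ennreal (norm x powr \<alpha>) \<partial>count_space (rng_neighbours \<psi>))"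
    using assms by (subst (1 2) nn_integral_count_space_indicator)
      (auto simp: NO_MATCH_def intro!: nn_integral_mono split: split_indicator)
  then show ?thesis
    by (simp add: xi_RN_eq_rng_neighbours mult_left_mono)
qed

lemma score_increase_imp_rng_neighbour:
  fixes X :: "'a::euclidean_space set"
  assumes "y \<in> X" and "xi_RN \<alpha> (shift_cfg (insert 0 X) y) > xi_RN \<alpha> (shift_cfg X y)"
  shows "y \<in> rng_neighbours (insert 0 X) - {0}"
proof -
  have "y \<noteq> 0"
    using assms by (metis insert_absorb order_less_irrefl)
  have shift_insert: "shift_cfg (insert 0 X) y = insert (- y) (shift_cfg X y)"
    by (simp add: shift_cfg_def)
  have "- y \<in> rng_neighbours (insert (- y) (shift_cfg X y))"
  proof (rule ccontr)
    assume "- y \<notin> rng_neighbours (insert (- y) (shift_cfg X y))"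
    then have "rng_neighbours (insert (- y) (shift_cfg X y)) \<subseteq> rng_neighbours (shift_cfg X y)"
      by (auto simp: rng_neighbours_def)
    then show False
      using xi_RN_mono_rng_neighbours assms(2) shift_insert by (metis leD)
  qed
  then have "shift_cfg X y \<inter> lune (- y) = {}"
    by (simp add: rng_neighbours_def)
  then have "X \<inter> lune y = {}"
    by (auto simp: shift_cfg_def lune_def dist_norm norm_minus_commute)
  moreover have "0 \<notin> lune y"
    by (simp add: lune_def)
  ultimately show ?thesis
    using assms(1) \<open>y \<noteq> 0\<close> by (auto simp: rng_neighbours_def)
qed

lemma rng_neighbours_inner_le:
  assumes "x \<in> rng_neighbours \<phi>" "y \<in> rng_neighbours \<phi>" and "norm x < norm y"
  shows "inner x y \<le> norm x * norm y / 2"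
proof -
  have "x \<notin> lune y"
    using assms(1,2) by (auto simp: rng_neighbours_def)
  then have "norm y \<le> norm (x - y)"
    using assms(3) by (auto simp: lune_def dist_norm norm_minus_commute)
  then have "norm y ^ 2 \<le> norm (x - y) ^ 2"
    by (simp add: power_mono)
  then have "inner x y \<le> norm x ^ 2 / 2"
    by (simp add: power2_norm_eq_inner inner_diff_left inner_diff_right inner_commute)
  also have "\<dots> \<le> norm x * norm y / 2"
    using assms(3) by (simp add: power2_eq_square mult_left_mono)
  finally show ?thesis .
qed

lemma dist_floor_grid_less_1:
  fixes u v :: "'a::euclidean_space"
  assumes "\<And>b. b \<in> Basis \<Longrightarrow> \<lfloor>DIM('a) * inner u b\<rfloor> = \<lfloor>DIM('a) * inner v b\<rfloor>"
  shows "dist u v < 1"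
proof -
  have coord: "\<bar>inner (u - v) b\<bar> < 1 / DIM('a)" if "b \<in> Basis" for b
  proof -
    have "\<bar>DIM('a) * inner u b - DIM('a) * inner v b\<bar> < 1"
      using assms[OF that] by (smt (verit, best) floor_eq_iff)
    also have "\<bar>DIM('a) * inner u b - DIM('a) * inner v b\<bar> = DIM('a) * \<bar>inner (u - v) b\<bar>"
      by (simp add: inner_diff_left abs_mult flip: right_diff_distrib)
    finally show ?thesis
      by (simp add: field_simps)
  qed
  have "dist u v \<le> (\<Sum>b\<in>Basis. \<bar>inner (u - v) b\<bar>)"
    unfolding dist_norm by (rule norm_le_l1)
  also have "\<dots> < (\<Sum>b\<in>(Basis::'a set). 1 / DIM('a))"
    by (rule sum_strict_mono) (use coord in auto)
  also have "\<dots> = 1"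
    by simp
  finally show ?thesis .
qed

lemma card_separated_subset_cball_le:
  fixes T :: "'a::euclidean_space set"
  assumes "T \<subseteq> cball 0 1" and "\<And>u v. u \<in> T \<Longrightarrow> v \<in> T \<Longrightarrow> u \<noteq> v \<Longrightarrow> 1 \<le> dist u v"
  shows "finite T \<and> card T \<le> (2 * DIM('a) + 1) ^ DIM('a)"
proof -
  define d where "d = DIM('a)"
  define cell where "cell u = (\<lambda>b\<in>Basis. \<lfloor>real d * inner u b\<rfloor>)" for u :: 'a
  define P where "P = (\<Pi>\<^sub>E b\<in>(Basis::'a set). {-int d..int d})"
  have "cell ` T \<subseteq> P"
  proof (clarsimp simp: P_def cell_def)
    fix u b assume "u \<in> T" "(b::'a) \<in> Basis"
    then have "\<bar>inner u b\<bar> \<le> 1"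
      using assms(1) Basis_le_norm[of b u] by auto
    then have "\<bar>real d * inner u b\<bar> \<le> real d"
      by (simp add: abs_mult mult_left_le)
    then show "- int d \<le> \<lfloor>real d * inner u b\<rfloor> \<and> \<lfloor>real d * inner u b\<rfloor> \<le> int d"
      by (simp add: abs_le_iff le_floor_iff floor_le_iff)
  qed
  moreover have "inj_on cell T"
  proof (rule inj_onI, rule ccontr)
    fix u v assume "u \<in> T" "v \<in> T" "cell u = cell v" "u \<noteq> v"
    then have "dist u v < 1"
      by (intro dist_floor_grid_less_1) (metis cell_def d_def restrict_apply')
    with assms(2) \<open>u \<in> T\<close> \<open>v \<in> T\<close> \<open>u \<noteq> v\<close> show False
      by fastforce
  qed
  moreover have "finite P" and "card P = (2 * d + 1) ^ d"
    unfolding P_def by (simp_all add: finite_PiE card_PiE d_def nat_add_distrib nat_mult_distrib)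
  ultimately show ?thesis
    using inj_on_finite card_inj_on_le unfolding d_def by metis
qed

lemma dist_sgn_ge_1:
  fixes u v :: "'a::real_inner"
  assumes "u \<noteq> 0" "v \<noteq> 0" and "inner u v \<le> norm u * norm v / 2"
  shows "1 \<le> dist (sgn u) (sgn v)"
proof -
  have "inner (sgn u) (sgn v) \<le> 1 / 2"
    using assms by (simp add: sgn_div_norm divide_simps mult.commute)
  moreover have "dist (sgn u) (sgn v) ^ 2 = 2 - 2 * inner (sgn u) (sgn v)"
    using assms by (simp add: dist_norm power2_norm_eq_inner inner_diff_left inner_diff_right
        inner_commute) (simp add: dot_square_norm norm_sgn)
  ultimately have "1 \<le> dist (sgn u) (sgn v) ^ 2"
    by simp
  then show ?thesis
    by (metis zero_le_dist power2_le_imp_le power_one)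
qed

lemma card_wide_angle_le:
  fixes S :: "'a::euclidean_space set"
  assumes "0 \<notin> S" and "\<And>u v. u \<in> S \<Longrightarrow> v \<in> S \<Longrightarrow> u \<noteq> v \<Longrightarrow> inner u v \<le> norm u * norm v / 2"
  shows "finite S \<and> card S \<le> (2 * DIM('a) + 1) ^ DIM('a)"
proof -
  have sep: "1 \<le> dist (sgn u) (sgn v)" if "u \<in> S" "v \<in> S" "u \<noteq> v" for u v
    using assms that by (metis dist_sgn_ge_1)
  then have "inj_on sgn S"
    by (fastforce intro: inj_onI)
  moreover have "finite (sgn ` S) \<and> card (sgn ` S) \<le> (2 * DIM('a) + 1) ^ DIM('a)"
    using sep assms(1) by (intro card_separated_subset_cball_le) (auto simp: norm_sgn)
  ultimately show ?thesis
    by (simp add: card_image finite_image_iff)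
qed

lemma card_rng_neighbours_le:
  fixes \<phi> :: "'a::euclidean_space set"
  assumes "inj_on norm \<phi>"
  shows "finite (rng_neighbours \<phi> - {0}) \<and> card (rng_neighbours \<phi> - {0}) \<le> (2 * DIM('a) + 1) ^ DIM('a)"
proof (rule card_wide_angle_le)
  fix u v assume "u \<in> rng_neighbours \<phi> - {0}" "v \<in> rng_neighbours \<phi> - {0}" "u \<noteq> v"
  moreover from this have "norm u \<noteq> norm v"
    using assms by (auto simp: rng_neighbours_def inj_on_def)
  ultimately show "inner u v \<le> norm u * norm v / 2"
    using rng_neighbours_inner_le[of u \<phi> v] rng_neighbours_inner_le[of v \<phi> u]
    by (cases "norm u < norm v") (auto simp: inner_commute mult.commute)
qed simp

lemma poisson_pp_two_points:
  fixes M :: "'w measure" and X :: "'w \<Rightarrow> 'a::euclidean_space set"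
  assumes pp: "poisson_pp M X" and B: "B \<in> sets lborel" "bounded B"
  shows "{\<omega>\<in>space M. 2 \<le> card (X \<omega> \<inter> B)} \<in> sets M"
    and "measure M {\<omega>\<in>space M. 2 \<le> card (X \<omega> \<inter> B)} \<le> measure lborel B ^ 2"
proof -
  interpret prob_space M
    using pp by (simp add: poisson_pp_def)
  define N where "N \<omega> = card (X \<omega> \<inter> B)" for \<omega>
  define m where "m = measure lborel B"
  have N_measurable: "N \<in> measurable M (count_space UNIV)"
    using pp B by (simp add: poisson_pp_def N_def[abs_def])
  have prob_N: "prob {\<omega>\<in>space M. N \<omega> = n} = exp (- m) * m ^ n / fact n" for n
    using pp B by (simp add: poisson_pp_def N_def m_def)
  have events: "{\<omega>\<in>space M. P (N \<omega>)} \<in> events" for P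
    using measurable_sets[OF N_measurable, of "{n. P n}"] by (simp add: vimage_def Int_def conj_commute)
  then show "{\<omega>\<in>space M. 2 \<le> card (X \<omega> \<inter> B)} \<in> events"
    by (simp add: N_def)
  have "{\<omega>\<in>space M. 2 \<le> N \<omega>} = space M - ({\<omega>\<in>space M. N \<omega> = 0} \<union> {\<omega>\<in>space M. N \<omega> = 1})"
    by auto
  then have "prob {\<omega>\<in>space M. 2 \<le> N \<omega>} = 1 - prob ({\<omega>\<in>space M. N \<omega> = 0} \<union> {\<omega>\<in>space M. N \<omega> = 1})"
    using events by (simp add: prob_compl)
  also have "\<dots> = 1 - exp (- m) * (1 + m)"
    using events prob_N by (subst finite_measure_Union) (auto simp: algebra_simps)
  also have "\<dots> \<le> m ^ 2"
  proof -
    have "(1 - m) * (1 + m) \<le> exp (- m) * (1 + m)"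
      using exp_ge_add_one_self[of "- m"] by (intro mult_right_mono) (auto simp: m_def)
    then show ?thesis
      by (simp add: algebra_simps power2_eq_square)
  qed
  finally show "prob {\<omega>\<in>space M. 2 \<le> card (X \<omega> \<inter> B)} \<le> measure lborel B ^ 2"
    by (simp add: N_def m_def)
qed

definition shell :: "real \<Rightarrow> real \<Rightarrow> 'a::euclidean_space set" where
  "shell a b = ball 0 b - ball 0 a"

lemma mem_shell_iff [simp]: "x \<in> shell a b \<longleftrightarrow> a \<le> norm x \<and> norm x < b"
  by (auto simp: shell_def)

lemma shell_sets [measurable]: "shell a b \<in> sets lborel"
  by (simp add: shell_def)

lemma bounded_shell: "bounded (shell a b)"
  unfolding shell_def by (rule bounded_subset[OF bounded_ball]) auto

lemma measure_shell:
  assumes "0 \<le> a" "a \<le> b"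
  shows "measure lborel (shell a b :: 'a::euclidean_space set)
       = unit_ball_vol DIM('a) * (b ^ DIM('a) - a ^ DIM('a))"
proof -
  have "measure lborel (shell a b :: 'a set) = measure lborel (ball (0::'a) b) - measure lborel (ball (0::'a) a)"
    unfolding shell_def using assms by (intro measure_Diff) (auto simp: emeasure_ball)
  also have "\<dots> = unit_ball_vol DIM('a) * (b ^ DIM('a) - a ^ DIM('a))"
    using assms by (simp add: content_ball right_diff_distrib)
  finally show ?thesis .
qed

lemma power_diff_le:
  fixes a b R :: real
  assumes "0 \<le> a" "a \<le> b" "b \<le> R"
  shows "b ^ d - a ^ d \<le> (b - a) * (d * R ^ (d - 1))"
proof -
  have "(\<Sum>i<d. a ^ (d - Suc i) * b ^ i) \<le> (\<Sum>i<d. R ^ (d - Suc i) * R ^ i)"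
    using assms by (intro sum_mono mult_mono power_mono) auto
  also have "\<dots> = d * R ^ (d - 1)"
    by (simp add: power_add[symmetric])
  finally have "(b - a) * (\<Sum>i<d. a ^ (d - Suc i) * b ^ i) \<le> (b - a) * (d * R ^ (d - 1))"
    using assms by (intro mult_left_mono) auto
  then show ?thesis
    by (simp add: power_diff_sumr2)
qed

lemma measure_shell_le:
  fixes R :: real and i n :: nat
  assumes "0 < R" "i < n"
  shows "measure lborel (shell (R * i / n) (R * real (i + 1) / n) :: 'a::euclidean_space set)
       \<le> unit_ball_vol DIM('a) * DIM('a) * R ^ DIM('a) / n"
proof -
  define d where "d = DIM('a)"
  have "R * real (i + 1) \<le> R * n"
    using assms by (intro mult_left_mono) auto
  then have "R * real (i + 1) / n \<le> R"
    using assms by (simp add: field_simps)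
  moreover have "0 \<le> R * i / n" "R * i / n \<le> R * real (i + 1) / n"
    using assms by (simp_all add: divide_right_mono)
  ultimately have "measure lborel (shell (R * i / n) (R * real (i + 1) / n) :: 'a set)
      \<le> unit_ball_vol d * ((R * real (i + 1) / n - R * i / n) * (d * R ^ (d - 1)))"
    unfolding measure_shell[OF \<open>0 \<le> R * i / n\<close> \<open>R * i / n \<le> R * real (i + 1) / n\<close>] d_def
    by (intro mult_left_mono power_diff_le) auto
  also have "\<dots> = unit_ball_vol d * d * (R * R ^ (d - 1)) / n"
    by (simp add: field_simps add_divide_distrib)
  also have "R * R ^ (d - 1) = R ^ d"
    by (simp add: d_def flip: power_Suc)
  finally show ?thesis
    by (simp add: d_def)
qed

definition crowded_shell :: "real \<Rightarrow> nat \<Rightarrow> 'a::euclidean_space set \<Rightarrow> bool" where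
  "crowded_shell R n \<phi> \<longleftrightarrow> (\<exists>i\<in>{..<n}. 2 \<le> card (\<phi> \<inter> shell (R * i / n) (R * real (i + 1) / n)))"

lemma norm_tie_imp_crowded_shell:
  fixes \<phi> :: "'a::euclidean_space set"
  assumes "locally_finite_cfg \<phi>" and "x \<in> \<phi>" "z \<in> \<phi>" "x \<noteq> z" "norm x = norm z"
    and "norm x < R" "0 < n"
  shows "crowded_shell R n \<phi>"
proof -
  have "0 < R"
    using assms(6) norm_ge_zero[of x] by linarith
  define t where "t = norm x * n / R"
  define i where "i = nat \<lfloor>t\<rfloor>"
  have "0 \<le> t" "t < n"
    using assms(6,7) \<open>0 < R\<close> by (simp_all add: t_def field_simps)
  then have "i \<le> t" "t < i + 1" "i < n"
    unfolding i_def by linarith+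
  then have shell: "R * i / n \<le> norm x" "norm x < R * real (i + 1) / n"
    using \<open>0 < R\<close> \<open>0 < n\<close> by (simp_all add: t_def field_simps)
  have "finite (\<phi> \<inter> shell (R * i / n) (R * real (i + 1) / n))"
    using assms(1) bounded_shell by (auto simp: locally_finite_cfg_def)
  then have "card {x, z} \<le> card (\<phi> \<inter> shell (R * i / n) (R * real (i + 1) / n))"
    using assms(2-5) shell by (intro card_mono) auto
  moreover have "card {x, z} = 2"
    using \<open>x \<noteq> z\<close> by simp
  ultimately show ?thesis
    using \<open>i < n\<close> unfolding crowded_shell_def by auto
qed

lemma poisson_pp_crowded_shell:
  fixes M :: "'w measure" and X :: "'w \<Rightarrow> 'a::euclidean_space set"
  assumes pp: "poisson_pp M X" and "0 < R"
  shows "{\<omega>\<in>space M. crowded_shell R n (X \<omega>)} \<in> sets M"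
    and "measure M {\<omega>\<in>space M. crowded_shell R n (X \<omega>)}
           \<le> (unit_ball_vol DIM('a) * DIM('a) * R ^ DIM('a)) ^ 2 / n"
proof -
  interpret prob_space M
    using pp by (simp add: poisson_pp_def)
  define C where "C = unit_ball_vol DIM('a) * DIM('a) * R ^ DIM('a)"
  define E where "E i = {\<omega>\<in>space M. 2 \<le> card (X \<omega> \<inter> (shell (R * i / n) (R * real (i + 1) / n) :: 'a set))}" for i :: nat
  have E: "E i \<in> events" "prob (E i) \<le> measure lborel (shell (R * i / n) (R * real (i + 1) / n) :: 'a set) ^ 2" for i
    unfolding E_def using poisson_pp_two_points[OF pp shell_sets bounded_shell] by auto
  have crowded_eq: "{\<omega>\<in>space M. crowded_shell R n (X \<omega>)} = (\<Union>i<n. E i)"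
    unfolding crowded_shell_def E_def by (simp add: set_eq_iff)
  then show "{\<omega>\<in>space M. crowded_shell R n (X \<omega>)} \<in> events"
    using E by auto
  have "prob (\<Union>i<n. E i) \<le> (\<Sum>i<n. prob (E i))"
    using E by (intro measure_UNION_le) auto
  also have "\<dots> \<le> (\<Sum>i<n. (C / n) ^ 2)"
  proof (rule sum_mono)
    fix i assume "i \<in> {..<n}"
    then show "prob (E i) \<le> (C / n) ^ 2"
      using E(2)[of i] measure_shell_le[OF \<open>0 < R\<close>, of i n, where 'a='a]
      by (auto simp: C_def intro: order_trans power_mono)
  qed
  also have "\<dots> = C ^ 2 / n"
    by (simp add: power2_eq_square)
  finally show "prob {\<omega>\<in>space M. crowded_shell R n (X \<omega>)} \<le> C ^ 2 / n"
    unfolding crowded_eq .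
qed

lemma poisson_pp_AE_inj_norm:
  fixes M :: "'w measure" and X :: "'w \<Rightarrow> 'a::euclidean_space set"
  assumes pp: "poisson_pp M X"
  shows "AE \<omega> in M. inj_on norm (X \<omega>)"
proof -
  interpret prob_space M
    using pp by (simp add: poisson_pp_def)
  define N where "N R = {\<omega>\<in>space M. \<forall>n. crowded_shell R (Suc n) (X \<omega>)}" for R
  have "N R \<in> null_sets M" if "0 < R" for R
  proof -
    define C where "C = unit_ball_vol DIM('a) * DIM('a) * R ^ DIM('a)"
    have "N R \<in> events"
      unfolding N_def using poisson_pp_crowded_shell(1)[OF pp that] by (rule sets.sets_Collect_countable_All)
    moreover have "prob (N R) \<le> C ^ 2 / Suc n" for n
    proof -
      have "prob (N R) \<le> prob {\<omega>\<in>space M. crowded_shell R (Suc n) (X \<omega>)}"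
        using poisson_pp_crowded_shell(1)[OF pp that] by (intro finite_measure_mono) (auto simp: N_def)
      also have "\<dots> \<le> C ^ 2 / Suc n"
        unfolding C_def by (rule poisson_pp_crowded_shell(2)[OF pp that])
      finally show ?thesis .
    qed
    then have "prob (N R) \<le> 0"
      by (intro LIMSEQ_le_const[OF LIMSEQ_Suc[OF lim_const_over_n[of "C ^ 2"]]]) auto
    ultimately show ?thesis
      by (simp add: null_sets_def emeasure_eq_measure measure_le_0_iff)
  qed
  then have "(\<Union>k. N (Suc k)) \<in> null_sets M"
    by (intro null_sets_UN) simp
  moreover have "{\<omega>\<in>space M. \<not> inj_on norm (X \<omega>)} \<subseteq> (\<Union>k. N (Suc k))"
  proof clarify
    fix \<omega> assume "\<omega> \<in> space M" "\<not> inj_on norm (X \<omega>)"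
    then obtain x z where "x \<in> X \<omega>" "z \<in> X \<omega>" "x \<noteq> z" "norm x = norm z"
      unfolding inj_on_def by blast
    moreover have "locally_finite_cfg (X \<omega>)"
      using pp \<open>\<omega> \<in> space M\<close> by (simp add: poisson_pp_def)
    moreover have "norm x < Suc (nat \<lceil>norm x\<rceil>)"
      by linarith
    ultimately have "\<omega> \<in> N (Suc (nat \<lceil>norm x\<rceil>))"
      using \<open>\<omega> \<in> space M\<close> by (auto simp: N_def intro: norm_tie_imp_crowded_shell)
    then show "\<omega> \<in> (\<Union>k. N (Suc k))"
      by blast
  qed
  ultimately show ?thesis
    by (rule AE_I')
qed

theorem lemma2p2:
  fixes M :: "'w measure" and X :: "'w \<Rightarrow> 'a::euclidean_space set" and \<alpha> :: real
  assumes "\<alpha> \<ge> 0"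
    and "poisson_pp M X"
  shows "\<exists>k::nat. k \<ge> 1 \<and>
    (AE \<omega> in M. finite {y \<in> X \<omega>. xi_RN \<alpha> (shift_cfg (insert 0 (X \<omega>)) y) > xi_RN \<alpha> (shift_cfg (X \<omega>) y)}
              \<and> card {y \<in> X \<omega>. xi_RN \<alpha> (shift_cfg (insert 0 (X \<omega>)) y) > xi_RN \<alpha> (shift_cfg (X \<omega>) y)} \<le> k)"
proof (intro exI conjI)
  show "1 \<le> (2 * DIM('a) + 1) ^ DIM('a)"
    by simp
  show "AE \<omega> in M. finite {y \<in> X \<omega>. xi_RN \<alpha> (shift_cfg (insert 0 (X \<omega>)) y) > xi_RN \<alpha> (shift_cfg (X \<omega>) y)}
              \<and> card {y \<in> X \<omega>. xi_RN \<alpha> (shift_cfg (insert 0 (X \<omega>)) y) > xi_RN \<alpha> (shift_cfg (X \<omega>) y)}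
                  \<le> (2 * DIM('a) + 1) ^ DIM('a)"
    using poisson_pp_AE_inj_norm[OF assms(2)]
  proof eventually_elim
    case (elim \<omega>)
    have "{y \<in> X \<omega>. xi_RN \<alpha> (shift_cfg (insert 0 (X \<omega>)) y) > xi_RN \<alpha> (shift_cfg (X \<omega>) y)}
        \<subseteq> rng_neighbours (insert 0 (X \<omega>)) - {0}"
      using score_increase_imp_rng_neighbour by blast
    moreover have "inj_on norm (insert 0 (X \<omega>))"
      using elim by auto
    ultimately show ?case
      using card_rng_neighbours_le finite_subset card_mono order_trans by meson
  qed
qed

end
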